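(* Let $A$, $B$ be formulas and $\Delta$ a context. If for every irreducible context $\Gamma$, the existence of a focused derivation of $\Gamma\vdash A$ implies the existence of a focused derivation of $\Gamma,\Delta\vdash B$, then $A,\Delta\vdash B$ has a focused derivation. In particular, $A\vdash A$ has a focused derivation for every formula $A$.
   Context: Formulas are built from atoms ($p,q,\dots$) by a binary product: every formula is an atom or $A\bullet B$. A context is a finite (possibly empty) list of formulas; commas denote concatenation. A context is irreducible if its leftmost formula is not a product (it is empty or begins with an atom). A focused derivation of a sequent is a finite derivation tree with no undischarged premises using only the rules: ($\bullet L$): from $A,B,\Delta\vdash C$ infer $A\bullet B,\Delta\vdash C$; ($\bullet R^{foc}$): from $\Gamma\vdash A$ and $\Delta\vdash B$ infer $\Gamma,\Delta\vdash A\bullet B$, where $\Gamma$ is irreducible; and ($id^{atm}$): $p\vdash p$ for atoms $p$. *)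

theory Defs
  imports Main
begin

datatype 'a fma = Atom 'a | Prod "'a fma" "'a fma"

text \<open>Contexts are finite lists of formulas; commas denote list concatenation.\<close>
type_synonym 'a ctx = "'a fma list"

definition irreducible :: "'a ctx \<Rightarrow> bool" where
  "irreducible \<Gamma> \<longleftrightarrow> (\<Gamma> = [] \<or> (\<exists>p \<Gamma>'. \<Gamma> = Atom p # \<Gamma>'))"

inductive foc :: "'a ctx \<Rightarrow> 'a fma \<Rightarrow> bool" where
  prodL: "foc (A # B # \<Delta>) C \<Longrightarrow> foc (Prod A B # \<Delta>) C"
| prodR: "irreducible \<Gamma> \<Longrightarrow> foc \<Gamma> A \<Longrightarrow> foc \<Delta> B \<Longrightarrow> foc (\<Gamma> @ \<Delta>) (Prod A B)"
| idatm: "foc [Atom p] (Atom p)"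

end

theory Submission
  imports Defs
begin

(* For an atom p, take the irreducible context [p]. For A1 \<bullet> A2, the left rule
   reduces the goal to A1, A2, \<Delta> \<turnstile> B, which the induction hypothesis for A1 yields once every
   irreducible \<Gamma>1 \<turnstile> A1 extends to \<Gamma>1, A2 \<turnstile> A1 \<bullet> A2 by the focused right rule; the identity
   A2 \<turnstile> A2 needed there is the case \<Delta> = [], B = A2 of the induction hypothesis for A2. *)

lemma foc_nonempty: "foc \<Gamma> A \<Longrightarrow> \<Gamma> \<noteq> []"
  by (induction rule: foc.induct) auto

lemma irreducible_append: "irreducible \<Gamma> \<Longrightarrow> \<Gamma> \<noteq> [] \<Longrightarrow> irreducible (\<Gamma> @ \<Delta>)"
  unfolding irreducible_def by auto

lemma foc_Cons_if_irreducible_extensions: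
  assumes "\<And>\<Gamma>. irreducible \<Gamma> \<Longrightarrow> foc \<Gamma> A \<Longrightarrow> foc (\<Gamma> @ \<Delta>) B"
  shows "foc (A # \<Delta>) B"
  using assms
proof (induction A arbitrary: \<Delta> B)
  case (Atom p)
  have "irreducible [Atom p]"
    unfolding irreducible_def by auto
  with Atom.prems foc.idatm show ?case
    by fastforce
next
  case (Prod A1 A2)
  have id_A2: "foc [A2] A2"
    using Prod.IH(2)[of "[]" A2] by simp
  have "foc (A1 # A2 # \<Delta>) B"
  proof (rule Prod.IH(1))
    fix \<Gamma>1
    assume irr: "irreducible \<Gamma>1" and der: "foc \<Gamma>1 A1"
    have "foc (\<Gamma>1 @ [A2]) (Prod A1 A2)"
      using foc.prodR[OF irr der id_A2] .
    moreover have "irreducible (\<Gamma>1 @ [A2])"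
      using irreducible_append[OF irr foc_nonempty[OF der]] .
    ultimately show "foc (\<Gamma>1 @ A2 # \<Delta>) B"
      using Prod.prems by fastforce
  qed
  then show ?case
    by (rule foc.prodL)
qed

corollary foc_identity: "foc [A] A"
  using foc_Cons_if_irreducible_extensions[of A "[]" A] by simp

theorem lemma1p13:
  fixes A B :: "'a fma" and \<Delta> :: "'a ctx"
  shows "((\<forall>\<Gamma>. irreducible \<Gamma> \<longrightarrow> foc \<Gamma> A \<longrightarrow> foc (\<Gamma> @ \<Delta>) B) \<longrightarrow> foc (A # \<Delta>) B)
         \<and> foc [A] A"
  using foc_Cons_if_irreducible_extensions foc_identity by blast

end
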